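(* Under the hypotheses and with the sequences $(\beta_k),(\lambda_k),(x_k),(y_k)$ of the accelerated scheme (any $\lambda_0>0$), set $\beta_0=0$, $\delta_k=F(y_k)-F(x^* )$ and $u_k=\beta_k x_k-(\beta_k-1)y_k-x^*$. Then for every $k\ge1$, $$\lambda_k\beta_k^2\,\delta_{k+1}-\lambda_{k-1}\beta_{k-1}^2\,\delta_k\le\tfrac12\big(\|u_k\|^2-\|u_{k+1}\|^2\big).$$
   Context: $\mathbb{R}^d$ carries the standard inner product $\langle\cdot,\cdot\rangle$ and Euclidean norm $\|\cdot\|$. $f:\mathbb{R}^d\to\mathbb{R}$ is convex and differentiable with $L$-Lipschitz gradient, $h:\mathbb{R}^d\to\mathbb{R}\cup\{+\infty\}$ is proper, closed and convex, $F=f+h$, and $x^*$ is a minimizer of $F$. For $\lambda>0$, $\mathrm{prox}_{\lambda h}(w)=\arg\min_{u}\{\lambda h(u)+\tfrac12\|u-w\|^2\}$ and $G^{f}_{\lambda h}(x)=\frac{1}{\lambda}(x-\mathrm{prox}_{\lambda h}(x-\lambda\nabla f(x)))$. The linesearch condition $\mathrm{(LS)}(x,\lambda)$ is: with $G=G^{f}_{\lambda h}(x)$, $f(x-2\lambda G)\le f(x-\lambda G)-\lambda\langle G,\nabla f(x)\rangle+\tfrac{\lambda}{2}\|G\|^2$. Accelerated scheme: $x_1=y_1\in\mathrm{dom}\,h$, $\lambda_0>0$, $\beta_1=1$, $\beta_{k+1}=\frac{1+\sqrt{1+4\beta_k^2}}{2}$, and for $k\ge1$: $\lambda_k=\max\{\lambda\in(0,\lambda_{k-1}]:\mathrm{(LS)}(x_k,\lambda)\}$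 (assumed attained), $y_{k+1}=x_k-\lambda_kG^{f}_{\lambda_kh}(x_k)$, $x_{k+1}=y_{k+1}+\frac{\beta_k-1}{\beta_{k+1}}(y_{k+1}-y_k)$. *)

theory Defs
  imports "HOL-Analysis.Analysis" "HOL-Library.Extended_Real"
begin

definition ext_proper :: "('a \<Rightarrow> ereal) \<Rightarrow> bool" where
  "ext_proper h \<longleftrightarrow> (\<forall>x. h x \<noteq> -\<infinity>) \<and> (\<exists>x. h x \<noteq> \<infinity>)"

definition ext_closed :: "('a::topological_space \<Rightarrow> ereal) \<Rightarrow> bool" where
  "ext_closed h \<longleftrightarrow> closed {(x, t::real). h x \<le> ereal t}"

definition ext_convex :: "('a::real_vector \<Rightarrow> ereal) \<Rightarrow> bool" where
  "ext_convex h \<longleftrightarrow> (\<forall>x y (t::real). 0 \<le> t \<and> t \<le> 1 \<longrightarrow>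
      h ((1 - t) *\<^sub>R x + t *\<^sub>R y) \<le> ereal (1 - t) * h x + ereal t * h y)"

definition edom :: "('a \<Rightarrow> ereal) \<Rightarrow> 'a set" where
  "edom h = {x. h x < \<infinity>}"

definition prox :: "real \<Rightarrow> ('a::real_normed_vector \<Rightarrow> ereal) \<Rightarrow> 'a \<Rightarrow> 'a" where
  "prox lam h w = (SOME u. \<forall>v. ereal lam * h u + ereal ((norm (u - w))\<^sup>2 / 2)
                              \<le> ereal lam * h v + ereal ((norm (v - w))\<^sup>2 / 2))"

definition gradmap :: "('a::real_normed_vector \<Rightarrow> 'a) \<Rightarrow> ('a \<Rightarrow> ereal) \<Rightarrow> real \<Rightarrow> 'a \<Rightarrow> 'a" where
  "gradmap gradf h lam x = (1 / lam) *\<^sub>R (x - prox lam h (x - lam *\<^sub>R gradf x))"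

definition LS :: "('a::real_inner \<Rightarrow> real) \<Rightarrow> ('a \<Rightarrow> 'a) \<Rightarrow> ('a \<Rightarrow> ereal) \<Rightarrow> 'a \<Rightarrow> real \<Rightarrow> bool" where
  "LS f gradf h x lam \<longleftrightarrow> (let G = gradmap gradf h lam x in
     f (x - (2 * lam) *\<^sub>R G) \<le> f (x - lam *\<^sub>R G) - lam * inner G (gradf x) + lam / 2 * (norm G)\<^sup>2)"

end

theory Submission
  imports Defs
begin

text \<open>
  Write \<open>p = x - \<lambda> G\<close> for the proximal-gradient point of \<open>x\<close>. The linesearch condition,
  together with convexity of \<open>f\<close> at \<open>p\<close>, replaces the usual descent lemma for \<open>L\<close>-smooth
  functions, and the optimality condition of the proximal step then yields the fundamental
  inequality \<open>F(p) + \<langle>G, z - x\<rangle> + \<lambda>/2 \<parallel>G\<parallel>\<^sup>2 \<le> F(z)\<close> for every \<open>z\<close>.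
  Taking \<open>(\<beta>\<^sub>k - 1)\<close> times this inequality at \<open>z = y\<^sub>k\<close> plus once at \<open>z = x\<^sup>*\<close>, multiplying by
  \<open>\<lambda>\<^sub>k \<beta>\<^sub>k\<close> and completing the square gives the estimate, because the momentum step is chosen
  so that \<open>u\<^sub>k\<^sub>+\<^sub>1 = u\<^sub>k - \<lambda>\<^sub>k \<beta>\<^sub>k G\<close>, because \<open>\<beta>\<^sub>k\<^sup>2 - \<beta>\<^sub>k = \<beta>\<^sub>k\<^sub>-\<^sub>1\<^sup>2\<close>, and because the step sizes
  do not increase.
\<close>

lemma ext_proper_not_MInf:
  assumes "ext_proper h"
  shows "h x \<noteq> -\<infinity>"
  using assms unfolding ext_proper_def by auto

lemma ext_proper_real:
  assumes "ext_proper h" and "h x \<noteq> \<infinity>"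
  obtains r where "h x = ereal r"
  using assms ext_proper_not_MInf[OF assms(1), of x] by (cases "h x") auto

lemma ext_proper_obtain_real:
  assumes "ext_proper h"
  obtains x r where "h x = ereal r"
  using assms ext_proper_real[OF assms] unfolding ext_proper_def by metis

lemma convex_on_gradient_ineq:
  fixes f :: "'a::real_inner \<Rightarrow> real"
  assumes fconv: "convex_on UNIV f"
    and fgrad: "\<And>z. (f has_derivative (\<lambda>v. inner (gradf z) v)) (at z)"
  shows "f x + inner (gradf x) (z - x) \<le> f z"
proof -
  define g where "g = (\<lambda>t::real. f (x + t *\<^sub>R (z - x)))"
  have gconv: "convex_on UNIV g"
  proof (rule convex_onI)
    fix t a b :: real assume "t > 0" "t < 1"
    have "x + ((1 - t) *\<^sub>R a + t *\<^sub>R b) *\<^sub>R (z - x)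
       = (1 - t) *\<^sub>R (x + a *\<^sub>R (z - x)) + t *\<^sub>R (x + b *\<^sub>R (z - x))"
      by (simp add: algebra_simps)
    then show "g ((1 - t) *\<^sub>R a + t *\<^sub>R b) \<le> (1 - t) * g a + t * g b"
      unfolding g_def using convex_onD[OF fconv, of t] \<open>t > 0\<close> \<open>t < 1\<close> by simp
  qed simp
  have "((\<lambda>t. x + t *\<^sub>R (z - x)) has_derivative (\<lambda>t. t *\<^sub>R (z - x))) (at 0)"
    by (auto intro!: derivative_eq_intros)
  from has_derivative_compose[OF this fgrad]
  have "(g has_derivative (\<lambda>t. inner (gradf x) (t *\<^sub>R (z - x)))) (at 0)"
    unfolding g_def o_def by simp
  then have "(g has_field_derivative inner (gradf x) (z - x)) (at 0 within UNIV)"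
    unfolding has_field_derivative_def by (rule has_derivative_eq_rhs) (auto simp: mult.commute)
  from convex_on_imp_above_tangent[OF gconv _ _ _ this, of 1]
  show ?thesis unfolding g_def by simp
qed

lemma ext_convex_epigraph:
  fixes h :: "'a::real_vector \<Rightarrow> ereal"
  assumes "ext_convex h"
  shows "convex {(x, t::real). h x \<le> ereal t}"
proof (rule convexI)
  fix p q :: "'a \<times> real" and u v :: real
  assume p: "p \<in> {(x, t). h x \<le> ereal t}" and q: "q \<in> {(x, t). h x \<le> ereal t}"
    and uv: "0 \<le> u" "0 \<le> v" "u + v = 1"
  obtain x1 t1 where p': "p = (x1, t1)" "h x1 \<le> ereal t1" using p by auto
  obtain x2 t2 where q': "q = (x2, t2)" "h x2 \<le> ereal t2" using q by auto
  have u: "u = 1 - v" using uv by simp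
  have "h ((1 - v) *\<^sub>R x1 + v *\<^sub>R x2) \<le> ereal (1 - v) * h x1 + ereal v * h x2"
    using assms uv unfolding ext_convex_def by auto
  also have "\<dots> \<le> ereal (1 - v) * ereal t1 + ereal v * ereal t2"
    using uv u p'(2) q'(2) by (intro add_mono ereal_mult_left_mono) auto
  finally show "u *\<^sub>R p + v *\<^sub>R q \<in> {(x, t). h x \<le> ereal t}"
    using p' q' u by simp
qed

text \<open>Separate a point strictly below the graph from the closed convex epigraph; the
  separating hyperplane cannot be vertical since it also separates a point on the graph.\<close>

lemma ext_affine_minorant:
  fixes h :: "'a::euclidean_space \<Rightarrow> ereal"
  assumes hprop: "ext_proper h" and hclosed: "ext_closed h" and hconv: "ext_convex h"
  obtains a c where "\<And>u. ereal (c + inner a u) \<le> h u"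
proof -
  let ?E = "{(x, t::real). h x \<le> ereal t}"
  obtain x0 r where r: "h x0 = ereal r" using ext_proper_obtain_real[OF hprop] .
  have "(x0, r - 1) \<notin> ?E" using r by simp
  from separating_hyperplane_closed_point[OF ext_convex_epigraph[OF hconv]
      hclosed[unfolded ext_closed_def] this]
  obtain p b where pb: "inner p (x0, r - 1) < b" "\<forall>q\<in>?E. inner p q > b" by blast
  obtain a s where ps: "p = (a, s)" by (cases p)
  have "(x0, r) \<in> ?E" using r by simp
  then have "inner a x0 + s * r > b" using pb(2) ps by auto
  with pb(1) ps have s: "s > 0" by (simp add: algebra_simps)
  have "ereal (b / s + inner (- a /\<^sub>R s) u) \<le> h u" for u
  proof (cases "h u")
    case (real t)
    then have "inner a u + s * t > b" using pb(2) ps by auto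
    then have "b / s + inner (- a /\<^sub>R s) u \<le> t" using s by (simp add: field_simps)
    then show ?thesis using real by simp
  qed (use ext_proper_not_MInf[OF hprop] in auto)
  then show thesis by (rule that)
qed

lemma quadratic_le_imp_bound:
  fixes n A K :: real
  assumes "0 \<le> A" and "n\<^sup>2 \<le> K + A * n"
  shows "n \<le> \<bar>K\<bar> + A + 1"
proof (rule ccontr)
  assume "\<not> ?thesis"
  then have n: "n > \<bar>K\<bar> + A + 1" by simp
  have "1 \<le> n" using n assms(1) by linarith
  then have "\<bar>K\<bar> \<le> n * \<bar>K\<bar>" using mult_right_mono[of 1 n "\<bar>K\<bar>"] by simp
  moreover have "n * n > n * (\<bar>K\<bar> + A)" using n assms(1) by (intro mult_strict_left_mono) auto
  ultimately show False using assms(2) by (simp add: power2_eq_square algebra_simps)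
qed

lemma bounded_prox_sublevel:
  fixes h :: "'a::real_inner \<Rightarrow> ereal"
  assumes minor: "\<And>u. ereal (c + inner a u) \<le> h u" and lam: "lam > 0"
  shows "bounded {(u, t). h u \<le> ereal t \<and> lam * t + (norm (u - w))\<^sup>2 / 2 \<le> M}"
proof -
  define R where "R = \<bar>2 * (M - lam * c - lam * inner a w)\<bar> + 2 * lam * norm a + 1"
  have "{(u, t). h u \<le> ereal t \<and> lam * t + (norm (u - w))\<^sup>2 / 2 \<le> M}
        \<subseteq> cball w R \<times> {c - norm a * (norm w + R) .. M / lam}"
  proof clarify
    fix u t assume ht: "h u \<le> ereal t" and tM: "lam * t + (norm (u - w))\<^sup>2 / 2 \<le> M"
    define n where "n = norm (u - w)"
    have ct: "c + inner a u \<le> t" using order.trans[OF minor ht] by simp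
    have "- (norm a * n) \<le> inner a (u - w)"
      unfolding n_def using Cauchy_Schwarz_ineq2[of a "u - w"] by linarith
    then have "lam * (inner a w - norm a * n) \<le> lam * inner a u"
      using lam by (simp add: inner_diff_right)
    moreover have "lam * (c + inner a u) \<le> lam * t" using ct lam by simp
    ultimately have "n\<^sup>2 \<le> 2 * (M - lam * c - lam * inner a w) + (2 * lam * norm a) * n"
      using tM unfolding n_def by (simp add: algebra_simps)
    from quadratic_le_imp_bound[OF _ this] lam
    have nR: "n \<le> R" unfolding R_def by simp
    have "norm u \<le> norm w + R" using norm_triangle_ineq[of w "u - w"] nR unfolding n_def by simp
    then have "norm a * norm u \<le> norm a * (norm w + R)" by (simp add: mult_left_mono)
    then have "- (norm a * (norm w + R)) \<le> inner a u"
      using Cauchy_Schwarz_ineq2[of a u] by (simp add: abs_le_iff)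
    moreover have "lam * t \<le> M" using tM zero_le_power2[of "norm (u - w)"] by linarith
    then have "t \<le> M / lam" using lam by (simp add: field_simps)
    ultimately show "u \<in> cball w R \<and> t \<in> {c - norm a * (norm w + R) .. M / lam}"
      using nR ct unfolding n_def by (simp add: dist_norm norm_minus_commute)
  qed
  then show ?thesis
    by (rule bounded_subset[OF bounded_Times[OF bounded_cball bounded_closed_interval]])
qed

text \<open>Since \<^const>\<open>prox\<close> is a choice term, its minimizing property is available only once a
  minimizer is known to exist; it is found on a sublevel set of the epigraph, which is compact
  by the affine minorant.\<close>

lemma prox_objective_has_minimizer:
  fixes h :: "'a::euclidean_space \<Rightarrow> ereal"
  assumes hprop: "ext_proper h" and hclosed: "ext_closed h" and hconv: "ext_convex h"
    and lam: "lam > 0"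
  shows "\<exists>u. \<forall>v. ereal lam * h u + ereal ((norm (u - w))\<^sup>2 / 2)
                  \<le> ereal lam * h v + ereal ((norm (v - w))\<^sup>2 / 2)"
proof -
  obtain a c where minor: "\<And>u. ereal (c + inner a u) \<le> h u"
    using ext_affine_minorant[OF hprop hclosed hconv] by blast
  obtain x0 r where r: "h x0 = ereal r" using ext_proper_obtain_real[OF hprop] .
  define M where "M = lam * r + (norm (x0 - w))\<^sup>2 / 2"
  define g where "g = (\<lambda>(u, t::real). lam * t + (norm (u - w))\<^sup>2 / 2)"
  define E where "E = {(u, t). h u \<le> ereal t \<and> lam * t + (norm (u - w))\<^sup>2 / 2 \<le> M}"
  have gcont: "continuous_on UNIV g"
    unfolding g_def case_prod_beta by (intro continuous_intros) auto
  have "E = {(u, t). h u \<le> ereal t} \<inter> {p. g p \<le> M}"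
    unfolding E_def g_def by auto
  moreover have "closed {p. g p \<le> M}"
    by (rule closed_Collect_le[OF gcont]) (auto intro: continuous_intros)
  ultimately have "closed E" using hclosed unfolding ext_closed_def by auto
  then have "compact E"
    using bounded_prox_sublevel[OF minor lam] unfolding E_def by (simp add: compact_eq_bounded_closed)
  moreover have "(x0, r) \<in> E" unfolding E_def M_def using r by simp
  ultimately obtain us ts where pE: "(us, ts) \<in> E" and pmin: "\<And>q. q \<in> E \<Longrightarrow> g (us, ts) \<le> g q"
    using continuous_attains_inf[OF _ _ continuous_on_subset[OF gcont]] by (metis empty_iff subset_UNIV surj_pair)
  have "ereal lam * h us + ereal ((norm (us - w))\<^sup>2 / 2) \<le> ereal lam * h v + ereal ((norm (v - w))\<^sup>2 / 2)"
    for v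
  proof (cases "h v")
    case (real s)
    have "ereal lam * h us \<le> ereal (lam * ts)"
      using ereal_mult_left_mono[of "h us" "ereal ts" "ereal lam"] pE lam unfolding E_def by simp
    then have "ereal lam * h us + ereal ((norm (us - w))\<^sup>2 / 2)
               \<le> ereal (lam * ts) + ereal ((norm (us - w))\<^sup>2 / 2)"
      by (rule add_right_mono)
    also have "\<dots> = ereal (g (us, ts))" unfolding g_def by simp
    also have "\<dots> \<le> ereal (g (v, s))"
    proof (cases "g (v, s) \<le> M")
      case True
      then have "(v, s) \<in> E" using real unfolding E_def g_def by simp
      then show ?thesis using pmin by simp
    next
      case False
      then show ?thesis using pE unfolding E_def g_def by simp
    qed
    finally show ?thesis using real unfolding g_def by simp
  qed (use lam ext_proper_not_MInf[OF hprop] in auto)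
  then show ?thesis by blast
qed

lemma prox_minimizes:
  fixes h :: "'a::euclidean_space \<Rightarrow> ereal"
  assumes "ext_proper h" and "ext_closed h" and "ext_convex h" and "lam > 0"
  shows "ereal lam * h (prox lam h w) + ereal ((norm (prox lam h w - w))\<^sup>2 / 2)
           \<le> ereal lam * h v + ereal ((norm (v - w))\<^sup>2 / 2)"
  using someI_ex[OF prox_objective_has_minimizer[OF assms]] unfolding prox_def by blast

lemma prox_finite:
  fixes h :: "'a::euclidean_space \<Rightarrow> ereal"
  assumes hprop: "ext_proper h" and "ext_closed h" and "ext_convex h" and lam: "lam > 0"
  obtains r where "h (prox lam h w) = ereal r"
proof (rule ext_proper_real[OF hprop])
  obtain x0 r where r: "h x0 = ereal r" using ext_proper_obtain_real[OF hprop] .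
  show "h (prox lam h w) \<noteq> \<infinity>"
    using prox_minimizes[OF assms, of w x0] r lam by auto
qed

lemma power2_norm_add_scaleR:
  fixes a b :: "'a::real_inner"
  shows "(norm (a + t *\<^sub>R b))\<^sup>2 = (norm a)\<^sup>2 + 2 * t * inner a b + t\<^sup>2 * (norm b)\<^sup>2"
proof -
  have "(norm (a + t *\<^sub>R b))\<^sup>2 = inner (a + t *\<^sub>R b) (a + t *\<^sub>R b)"
    by (rule power2_norm_eq_inner)
  also have "\<dots> = inner a a + 2 * t * inner a b + t\<^sup>2 * inner b b"
    by (simp add: inner_add_left inner_add_right inner_commute power2_eq_square algebra_simps)
  finally show ?thesis by (simp add: power2_norm_eq_inner)
qed

lemma le_of_le_add_scaled:
  fixes a b N :: real
  assumes "0 \<le> N" and "\<And>t. 0 < t \<Longrightarrow> t \<le> 1 \<Longrightarrow> a \<le> b + t * N"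
  shows "a \<le> b"
proof (rule field_le_epsilon)
  fix e :: real assume e: "0 < e"
  define t where "t = min 1 (e / (N + 1))"
  have t: "0 < t" "t \<le> 1" unfolding t_def using e assms(1) by auto
  have "t * N \<le> e / (N + 1) * N" unfolding t_def using assms(1) by (intro mult_right_mono) auto
  also have "\<dots> \<le> e" using e assms(1) by (simp add: field_simps)
  finally show "a \<le> b + e" using assms(2)[OF t] by linarith
qed

text \<open>Compare \<open>u\<close> with \<open>u + t (z - u)\<close> and let \<open>t \<rightarrow> 0\<close>.\<close>

lemma prox_variational_ineq:
  fixes h :: "'a::real_inner \<Rightarrow> ereal"
  assumes hprop: "ext_proper h" and hconv: "ext_convex h" and lam: "lam > 0"
    and umin: "\<And>v. ereal lam * h u + ereal ((norm (u - w))\<^sup>2 / 2)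
                  \<le> ereal lam * h v + ereal ((norm (v - w))\<^sup>2 / 2)"
    and hu: "h u = ereal hu" and hz: "h z = ereal hz"
  shows "lam * hu \<le> lam * hz + inner (u - w) (z - u)"
proof (rule le_of_le_add_scaled)
  define d where "d = inner (u - w) (z - u)"
  define N where "N = (norm (z - u))\<^sup>2 / 2"
  show "0 \<le> N" unfolding N_def by simp
  fix t :: real assume t: "0 < t" "t \<le> 1"
  define ut where "ut = (1 - t) *\<^sub>R u + t *\<^sub>R z"
  have "h ut \<le> ereal (1 - t) * h u + ereal t * h z"
    using hconv t unfolding ext_convex_def ut_def by auto
  then obtain s where s: "h ut = ereal s" "s \<le> (1 - t) * hu + t * hz"
    using hu hz ext_proper_real[OF hprop, of ut] by force
  have "ut - w = (u - w) + t *\<^sub>R (z - u)" unfolding ut_def by (simp add: algebra_simps)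
  then have nut: "(norm (ut - w))\<^sup>2 = (norm (u - w))\<^sup>2 + 2 * t * d + t\<^sup>2 * (norm (z - u))\<^sup>2"
    unfolding d_def by (simp only: power2_norm_add_scaleR)
  have "lam * hu + (norm (u - w))\<^sup>2 / 2 \<le> lam * s + (norm (ut - w))\<^sup>2 / 2"
    using umin[of ut] hu s by simp
  moreover have "lam * s \<le> lam * ((1 - t) * hu + t * hz)" using s lam by simp
  ultimately have "lam * hu \<le> lam * ((1 - t) * hu + t * hz) + t * d + t\<^sup>2 * (norm (z - u))\<^sup>2 / 2"
    using nut by linarith
  then have "t * (lam * hu) \<le> t * (lam * hz + d + t * N)"
    unfolding N_def by (simp add: algebra_simps power2_eq_square)
  then show "lam * hu \<le> lam * hz + inner (u - w) (z - u) + t * N"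
    using t unfolding d_def by simp
qed

lemma gradmap_step_eq_prox:
  assumes "lam \<noteq> 0"
  shows "x - lam *\<^sub>R gradmap gradf h lam x = prox lam h (x - lam *\<^sub>R gradf x)"
  using assms unfolding gradmap_def by simp

lemma gradmap_step_finite:
  fixes h :: "'a::euclidean_space \<Rightarrow> ereal"
  assumes "ext_proper h" and "ext_closed h" and "ext_convex h" and "lam > 0"
  obtains r where "h (x - lam *\<^sub>R gradmap gradf h lam x) = ereal r"
  using prox_finite[OF assms] gradmap_step_eq_prox[of lam] \<open>lam > 0\<close> by (metis less_irrefl)

text \<open>Gradient inequalities at \<open>p\<close> towards \<open>x\<close> and towards \<open>x - 2\<lambda>G\<close> add up to
  \<open>2 f(p) \<le> f(x) + f(x - 2\<lambda>G)\<close>, which turns (LS) into a sufficient-decrease estimate.\<close>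

lemma LS_imp_sufficient_decrease:
  fixes f :: "'a::real_inner \<Rightarrow> real"
  assumes fconv: "convex_on UNIV f"
    and fgrad: "\<And>z. (f has_derivative (\<lambda>v. inner (gradf z) v)) (at z)"
    and ls: "LS f gradf h x lam"
  defines "G \<equiv> gradmap gradf h lam x"
  shows "f (x - lam *\<^sub>R G) \<le> f x - lam * inner G (gradf x) + lam / 2 * (norm G)\<^sup>2"
proof -
  define p where "p = x - lam *\<^sub>R G"
  have "f p + inner (gradf p) (- (lam *\<^sub>R G)) \<le> f (x - (2 * lam) *\<^sub>R G)"
    using convex_on_gradient_ineq[OF fconv fgrad, of p "x - (2 * lam) *\<^sub>R G"]
    unfolding p_def by (simp add: algebra_simps scaleR_2 flip: scaleR_add_left)
  moreover have "f p + inner (gradf p) (lam *\<^sub>R G) \<le> f x"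
    using convex_on_gradient_ineq[OF fconv fgrad, of p x] unfolding p_def by simp
  moreover have "f (x - (2 * lam) *\<^sub>R G) \<le> f p - lam * inner G (gradf x) + lam / 2 * (norm G)\<^sup>2"
    using ls unfolding LS_def G_def[symmetric] p_def Let_def .
  ultimately show ?thesis unfolding p_def by (simp add: inner_minus_right)
qed

lemma prox_grad_ineq:
  fixes f :: "'a::euclidean_space \<Rightarrow> real" and h :: "'a \<Rightarrow> ereal"
  assumes fconv: "convex_on UNIV f"
    and fgrad: "\<And>z. (f has_derivative (\<lambda>v. inner (gradf z) v)) (at z)"
    and hprop: "ext_proper h" and hclosed: "ext_closed h" and hconv: "ext_convex h"
    and lam: "lam > 0" and ls: "LS f gradf h x lam"
  defines "G \<equiv> gradmap gradf h lam x"
  assumes hp: "h (x - lam *\<^sub>R G) = ereal hp" and hz: "h z = ereal hz"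
  shows "f (x - lam *\<^sub>R G) + hp + inner G (z - x) + lam / 2 * (norm G)\<^sup>2 \<le> f z + hz"
proof -
  define g where "g = gradf x"
  define w where "w = x - lam *\<^sub>R g"
  define p where "p = x - lam *\<^sub>R G"
  have pprox: "p = prox lam h w"
    unfolding p_def G_def w_def g_def using lam by (intro gradmap_step_eq_prox) simp
  have "lam * hp \<le> lam * hz + inner (p - w) (z - p)"
    using prox_variational_ineq[OF hprop hconv lam prox_minimizes[OF hprop hclosed hconv lam] _ hz,
        of w hp]
    unfolding pprox[symmetric] p_def hp by blast
  moreover have "p - w = lam *\<^sub>R (g - G)" and "z - p = (z - x) + lam *\<^sub>R G"
    unfolding p_def w_def by (simp_all add: algebra_simps)
  ultimately have "lam * hp \<le> lam * (hz + inner g (z - x) + lam * inner G g - inner G (z - x)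
                                      - lam * (norm G)\<^sup>2)"
    by (simp add: inner_diff_left inner_add_right inner_commute power2_norm_eq_inner algebra_simps)
  then have "hp \<le> hz + inner g (z - x) + lam * inner G g - inner G (z - x) - lam * (norm G)\<^sup>2"
    using lam by simp
  moreover have "f x + inner g (z - x) \<le> f z"
    unfolding g_def by (rule convex_on_gradient_ineq[OF fconv fgrad])
  moreover have "f p \<le> f x - lam * inner G g + lam / 2 * (norm G)\<^sup>2"
    using LS_imp_sufficient_decrease[OF fconv fgrad ls] unfolding p_def g_def G_def .
  ultimately show ?thesis unfolding p_def by simp
qed

lemma accelerated_step_ineq:
  fixes f :: "'a::euclidean_space \<Rightarrow> real" and h :: "'a \<Rightarrow> ereal"
  assumes fconv: "convex_on UNIV f"
    and fgrad: "\<And>z. (f has_derivative (\<lambda>v. inner (gradf z) v)) (at z)"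
    and hprop: "ext_proper h" and hclosed: "ext_closed h" and hconv: "ext_convex h"
    and lam: "lam > 0" and lam_le: "lam \<le> lam0" and ls: "LS f gradf h x lam" and t: "t \<ge> 1"
  defines "G \<equiv> gradmap gradf h lam x"
  assumes hp: "h (x - lam *\<^sub>R G) = ereal hp" and hy: "h y = ereal hy" and hs: "h xs = ereal hs"
    and xs_le: "f xs + hs \<le> f y + hy"
  shows "lam * t\<^sup>2 * ((f (x - lam *\<^sub>R G) + hp) - (f xs + hs))
           - lam0 * (t\<^sup>2 - t) * ((f y + hy) - (f xs + hs))
         \<le> ((norm (t *\<^sub>R x - (t - 1) *\<^sub>R y - xs))\<^sup>2
              - (norm (t *\<^sub>R x - (t - 1) *\<^sub>R y - xs - (t * lam) *\<^sub>R G))\<^sup>2) / 2"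
proof -
  define Fp where "Fp = f (x - lam *\<^sub>R G) + hp"
  define Fy where "Fy = f y + hy"
  define Fs where "Fs = f xs + hs"
  define u where "u = t *\<^sub>R x - (t - 1) *\<^sub>R y - xs"
  define N where "N = (norm G)\<^sup>2"
  have at_y: "Fp + inner G (y - x) + lam / 2 * N \<le> Fy"
    using prox_grad_ineq[OF fconv fgrad hprop hclosed hconv lam ls hp[unfolded G_def] hy]
    unfolding Fp_def Fy_def N_def G_def .
  have at_xs: "Fp + inner G (xs - x) + lam / 2 * N \<le> Fs"
    using prox_grad_ineq[OF fconv fgrad hprop hclosed hconv lam ls hp[unfolded G_def] hs]
    unfolding Fp_def Fs_def N_def G_def .
  have "u = - ((t - 1) *\<^sub>R (y - x) + (xs - x))" unfolding u_def by (simp add: algebra_simps)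
  then have Gu: "inner G u = - ((t - 1) * inner G (y - x) + inner G (xs - x))"
    by (simp add: inner_add_right inner_diff_right)
  from mult_left_mono[OF at_y, of "t - 1"] t
  have "t * (Fp - Fs) - (t - 1) * (Fy - Fs) \<le> inner G u - t * lam / 2 * N"
    using at_xs unfolding Gu by (simp add: algebra_simps add_divide_distrib diff_divide_distrib)
  from mult_left_mono[OF this, of "lam * t"] lam t
  have "lam * t\<^sup>2 * (Fp - Fs) - lam * (t\<^sup>2 - t) * (Fy - Fs)
        \<le> lam * t * inner G u - (t * lam)\<^sup>2 * N / 2"
    by (simp add: algebra_simps power2_eq_square)
  moreover have "lam * (t\<^sup>2 - t) * (Fy - Fs) \<le> lam0 * (t\<^sup>2 - t) * (Fy - Fs)"
    using lam_le t xs_le unfolding Fy_def Fs_def by (intro mult_right_mono) (auto simp: power2_eq_square)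
  moreover have "(norm (u - (t * lam) *\<^sub>R G))\<^sup>2 = (norm u)\<^sup>2 - 2 * (t * lam) * inner u G + (t * lam)\<^sup>2 * N"
    using power2_norm_add_scaleR[of u "- (t * lam)" G] unfolding N_def by simp
  ultimately show ?thesis
    unfolding Fp_def[symmetric] Fy_def[symmetric] Fs_def[symmetric] u_def[symmetric]
    by (simp add: inner_commute algebra_simps)
qed

lemma momentum_residual:
  fixes x y x' y' xs G :: "'a::real_vector"
  assumes "b' \<noteq> 0" and "y' = x - s *\<^sub>R G" and "x' = y' + ((t - 1) / b') *\<^sub>R (y' - y)"
  shows "b' *\<^sub>R x' - (b' - 1) *\<^sub>R y' - xs = (t *\<^sub>R x - (t - 1) *\<^sub>R y - xs) - (t * s) *\<^sub>R G"
proof -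
  have "b' *\<^sub>R x' = b' *\<^sub>R y' + (t - 1) *\<^sub>R (y' - y)"
    using assms(1,3) by (simp add: scaleR_add_right)
  then show ?thesis unfolding assms(2) by (simp add: algebra_simps)
qed

lemma fista_beta_sq:
  "((1 + sqrt (1 + 4 * b\<^sup>2)) / 2)\<^sup>2 - (1 + sqrt (1 + 4 * b\<^sup>2)) / 2 = b\<^sup>2"
proof -
  have "(sqrt (1 + 4 * b\<^sup>2))\<^sup>2 = 1 + 4 * b\<^sup>2" by simp
  then show ?thesis by (simp add: power2_eq_square field_simps)
qed

lemma fista_beta:
  fixes beta :: "nat \<Rightarrow> real"
  assumes beta0: "beta 0 = 0" and beta1: "beta 1 = 1"
    and betaS: "\<And>k. k \<ge> 1 \<Longrightarrow> beta (k + 1) = (1 + sqrt (1 + 4 * (beta k)\<^sup>2)) / 2"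
    and k: "k \<ge> 1"
  shows "1 \<le> beta k" and "(beta k)\<^sup>2 - beta k = (beta (k - 1))\<^sup>2"
proof -
  have "1 \<le> beta k \<and> (beta k)\<^sup>2 - beta k = (beta (k - 1))\<^sup>2"
  proof (cases "k = 1")
    case True
    then show ?thesis using beta0 beta1 by simp
  next
    case False
    define i where "i = k - 1"
    have i: "k = i + 1" "i \<ge> 1" using k False unfolding i_def by auto
    show ?thesis unfolding i betaS[OF i(2)] by (simp add: fista_beta_sq)
  qed
  then show "1 \<le> beta k" and "(beta k)\<^sup>2 - beta k = (beta (k - 1))\<^sup>2" by auto
qed

theorem mainTheorem9:
  fixes f :: "'a::euclidean_space \<Rightarrow> real" and gradf :: "'a \<Rightarrow> 'a" and L :: real
    and h :: "'a \<Rightarrow> ereal" and xs :: 'a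
    and lam beta :: "nat \<Rightarrow> real" and x y :: "nat \<Rightarrow> 'a"
  assumes fconv: "convex_on UNIV f"
    and fgrad: "\<And>z. (f has_derivative (\<lambda>v. inner (gradf z) v)) (at z)"
    and flip: "\<And>z w. norm (gradf z - gradf w) \<le> L * norm (z - w)"
    and hprop: "ext_proper h" and hclosed: "ext_closed h" and hconv: "ext_convex h"
    and xsmin: "\<And>z. ereal (f xs) + h xs \<le> ereal (f z) + h z"
    and x1: "x 1 = y 1" and x1dom: "x 1 \<in> edom h"
    and lam0: "lam 0 > 0"
    and beta0: "beta 0 = 0" and beta1: "beta 1 = 1"
    and betaS: "\<And>k. k \<ge> 1 \<Longrightarrow> beta (k + 1) = (1 + sqrt (1 + 4 * (beta k)\<^sup>2)) / 2"
    and lamk: "\<And>k. k \<ge> 1 \<Longrightarrow> 0 < lam k \<and> lam k \<le> lam (k - 1) \<and> LS f gradf h (x k) (lam k)"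
    and lammax: "\<And>k l. k \<ge> 1 \<Longrightarrow> 0 < l \<Longrightarrow> l \<le> lam (k - 1) \<Longrightarrow> LS f gradf h (x k) l \<Longrightarrow> l \<le> lam k"
    and yS: "\<And>k. k \<ge> 1 \<Longrightarrow> y (k + 1) = x k - lam k *\<^sub>R gradmap gradf h (lam k) (x k)"
    and xS: "\<And>k. k \<ge> 1 \<Longrightarrow>
               x (k + 1) = y (k + 1) + ((beta k - 1) / beta (k + 1)) *\<^sub>R (y (k + 1) - y k)"
    and k: "k \<ge> 1"
  shows "ereal (lam k * (beta k)\<^sup>2) * ((ereal (f (y (k + 1))) + h (y (k + 1))) - (ereal (f xs) + h xs))
         - ereal (lam (k - 1) * (beta (k - 1))\<^sup>2) * ((ereal (f (y k)) + h (y k)) - (ereal (f xs) + h xs))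
         \<le> ereal ((norm (beta k *\<^sub>R x k - (beta k - 1) *\<^sub>R y k - xs))\<^sup>2
                  - (norm (beta (k + 1) *\<^sub>R x (k + 1) - (beta (k + 1) - 1) *\<^sub>R y (k + 1) - xs))\<^sup>2) / 2"
  \<comment> \<open>The Lipschitz bound and the maximality of \<open>lam k\<close> only make the linesearch well posed;
    the estimate needs just (LS) and \<open>lam k \<le> lam (k - 1)\<close>.\<close>
proof -
  have lam_k: "0 < lam k" "lam k \<le> lam (k - 1)" "LS f gradf h (x k) (lam k)"
    using lamk[OF k] by auto
  have "h (y k) \<noteq> \<infinity>"
  proof (cases "k = 1")
    case True
    then show ?thesis using x1 x1dom unfolding edom_def by auto
  next
    case False
    define i where "i = k - 1"
    have i: "k = i + 1" "i \<ge> 1" using k False unfolding i_def by auto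
    obtain r where "h (y (i + 1)) = ereal r"
      unfolding yS[OF i(2)] using gradmap_step_finite[OF hprop hclosed hconv] lamk[OF i(2)] by blast
    then show ?thesis unfolding i by simp
  qed
  then obtain hk where hk: "h (y k) = ereal hk" using ext_proper_real[OF hprop] by blast
  obtain hk1 where hk1: "h (y (k + 1)) = ereal hk1"
    unfolding yS[OF k] by (rule gradmap_step_finite[OF hprop hclosed hconv lam_k(1)])
  have "h xs \<noteq> \<infinity>" using xsmin[of "y k"] hk by auto
  then obtain hs where hs: "h xs = ereal hs" using ext_proper_real[OF hprop] by blast
  have "f xs + hs \<le> f (y k) + hk" using xsmin[of "y k"] hk hs by simp
  note step = accelerated_step_ineq[OF fconv fgrad hprop hclosed hconv lam_k
      fista_beta(1)[OF beta0 beta1 betaS k] hk1[unfolded yS[OF k]] hk hs this]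
  have "beta (k + 1) \<noteq> 0" using fista_beta(1)[OF beta0 beta1 betaS, of "k + 1"] by simp
  then have u_next: "beta (k + 1) *\<^sub>R x (k + 1) - (beta (k + 1) - 1) *\<^sub>R y (k + 1) - xs
        = (beta k *\<^sub>R x k - (beta k - 1) *\<^sub>R y k - xs) - (beta k * lam k) *\<^sub>R gradmap gradf h (lam k) (x k)"
    by (rule momentum_residual[OF _ yS[OF k] xS[OF k]])
  show ?thesis
    using step fista_beta(2)[OF beta0 beta1 betaS k] unfolding u_next hk hk1 hs
    unfolding yS[OF k] by simp
qed

end
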